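(* Let $(\mathcal{X},\|\cdot\|)$ be a real Banach space, $P$ a probability distribution on a measurable space $\mathcal{E}$, and $Q,P_e:\mathcal{X}\to\mathcal{X}$ ($e\in\mathcal{E}$). Assume: (A1) $\|Q(\theta_1)-Q(\theta_2)\|\le\rho\|\theta_1-\theta_2\|$ for all $\theta_1,\theta_2$, with $\rho\in[0,1)$, and $\theta^\star$ is the unique fixed point of $Q$; (A2) $\|P_e(\theta_1)-P_e(\theta_2)\|\le L\|\theta_1-\theta_2\|$ for all $\theta_1,\theta_2$ and all $e$, with $L\ge0$; (A3) $W_e:=\|P_e(\theta^\star)-\theta^\star\|$ satisfies $\mathbb{E}_{e\sim P}[W_e]\le\sigma$ for some $\sigma\ge0$. Let $\theta_0\in\mathcal{X}$, let $e_0,e_1,\dots$ be i.i.d. with law $P$, and set $\theta_{t+1}=Q(P_{e_t}(\theta_t))$. Let $\gamma:=\rho L$ and $u_t:=\mathbb{E}[\|\theta_t-\theta^\star\|]$. Then: (i) if $\gamma<1$, $u_t\le\gamma^tu_0+\rho\sigma\frac{1-\gamma^t}{1-\gamma}$ for all $t$; (ii) $\mathbb{E}[\Omega(\theta_t;e_t)]\le2\gamma u_t+(1+\rho)\sigma$ for all $t$; (iii) if $\sigma=0$ and $\gamma<1$, then almost surely, for all $t$, $\|\theta_t-\theta^\star\|\le\gamma^t\|\theta_0-\theta^\star\|$ and $\Omega(\theta_t;e_t)\le2\gamma^{t+1}\|\theta_0-\theta^\star\|$.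
   Context: The order-gap is $\Omega(\theta;e):=\|Q(P_e(\theta))-P_e(Q(\theta))\|$. The events $e_t$ are independent of $\theta_0$ (which is deterministic), and $e_t$ is independent of $\theta_t$. *)

theory Defs
  imports "HOL-Probability.Probability"
begin

definition order_gap :: "('a::real_normed_vector \<Rightarrow> 'a) \<Rightarrow> ('e \<Rightarrow> 'a \<Rightarrow> 'a) \<Rightarrow> 'a \<Rightarrow> 'e \<Rightarrow> real" where
  "order_gap Q Pe \<theta> e = norm (Q (Pe e \<theta>) - Pe e (Q \<theta>))"

fun iter_seq :: "('a \<Rightarrow> 'a) \<Rightarrow> ('e \<Rightarrow> 'a \<Rightarrow> 'a) \<Rightarrow> 'a \<Rightarrow> (nat \<Rightarrow> 'w \<Rightarrow> 'e) \<Rightarrow> nat \<Rightarrow> 'w \<Rightarrow> 'a" where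
  "iter_seq Q Pe th0 e 0 \<omega> = th0"
| "iter_seq Q Pe th0 e (Suc t) \<omega> = Q (Pe (e t \<omega>) (iter_seq Q Pe th0 e t \<omega>))"

end

theory Submission
  imports Defs
begin

text \<open>
  Since \<open>\<theta>\<^sup>\<star>\<close> is fixed by \<open>Q\<close>, the triangle inequality through \<open>P\<^sub>e(\<theta>\<^sup>\<star>)\<close> gives, for every
  single event, \<open>\<parallel>Q(P\<^sub>e \<theta>) - \<theta>\<^sup>\<star>\<parallel> \<le> \<rho>L\<parallel>\<theta> - \<theta>\<^sup>\<star>\<parallel> + \<rho>W\<^sub>e\<close> and
  \<open>\<Omega>(\<theta>;e) \<le> 2\<rho>L\<parallel>\<theta> - \<theta>\<^sup>\<star>\<parallel> + (1 + \<rho>)W\<^sub>e\<close>. Integrating these pathwise bounds along the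
  iteration involves only the marginal law of each \<open>e\<^sub>t\<close>, under which \<open>W\<close> has expectation
  at most \<open>\<sigma>\<close>; unrolling the resulting linear recursion gives (i), and (ii) is immediate.
  If \<open>\<sigma> = 0\<close>, then almost surely \<open>W\<close> vanishes at every \<open>e\<^sub>t\<close> simultaneously, and the
  pathwise bounds become an exact geometric contraction, which is (iii).
\<close>

lemma norm_lipschitz_sub_le:
  fixes f :: "'a::real_normed_vector \<Rightarrow> 'a"
  assumes "\<And>x y. norm (f x - f y) \<le> L * norm (x - y)"
  shows "norm (f \<theta> - \<theta>s) \<le> L * norm (\<theta> - \<theta>s) + norm (f \<theta>s - \<theta>s)"
proof -
  have "norm (f \<theta> - \<theta>s) \<le> norm (f \<theta> - f \<theta>s) + norm (f \<theta>s - \<theta>s)"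
    using norm_triangle_ineq[of "f \<theta> - f \<theta>s" "f \<theta>s - \<theta>s"] by simp
  then show ?thesis
    using assms[of \<theta> \<theta>s] by simp
qed

lemma norm_comp_sub_fixpoint_le:
  fixes Q f :: "'a::real_normed_vector \<Rightarrow> 'a"
  assumes Q_lip: "\<And>x y. norm (Q x - Q y) \<le> \<rho> * norm (x - y)" and "0 \<le> \<rho>"
    and Q_fix: "Q \<theta>s = \<theta>s"
    and f_lip: "\<And>x y. norm (f x - f y) \<le> L * norm (x - y)"
  shows "norm (Q (f \<theta>) - \<theta>s) \<le> \<rho> * L * norm (\<theta> - \<theta>s) + \<rho> * norm (f \<theta>s - \<theta>s)"
proof -
  have "norm (Q (f \<theta>) - \<theta>s) \<le> \<rho> * norm (f \<theta> - \<theta>s)"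
    using Q_lip[of "f \<theta>" \<theta>s] Q_fix by simp
  also have "\<dots> \<le> \<rho> * (L * norm (\<theta> - \<theta>s) + norm (f \<theta>s - \<theta>s))"
    using norm_lipschitz_sub_le[OF f_lip] \<open>0 \<le> \<rho>\<close> by (rule mult_left_mono)
  finally show ?thesis
    by (simp add: algebra_simps)
qed

lemma norm_comp_commute_diff_le:
  fixes Q f :: "'a::real_normed_vector \<Rightarrow> 'a"
  assumes Q_lip: "\<And>x y. norm (Q x - Q y) \<le> \<rho> * norm (x - y)" and "0 \<le> \<rho>"
    and Q_fix: "Q \<theta>s = \<theta>s"
    and f_lip: "\<And>x y. norm (f x - f y) \<le> L * norm (x - y)" and "0 \<le> L"
  shows "norm (Q (f \<theta>) - f (Q \<theta>)) \<le> 2 * (\<rho> * L) * norm (\<theta> - \<theta>s) + (1 + \<rho>) * norm (f \<theta>s - \<theta>s)"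
proof -
  have "L * norm (Q \<theta> - \<theta>s) \<le> L * (\<rho> * norm (\<theta> - \<theta>s))"
    using Q_lip[of \<theta> \<theta>s] Q_fix \<open>0 \<le> L\<close> by (simp add: mult_left_mono)
  then have "norm (f (Q \<theta>) - \<theta>s) \<le> \<rho> * L * norm (\<theta> - \<theta>s) + norm (f \<theta>s - \<theta>s)"
    using norm_lipschitz_sub_le[OF f_lip, of "Q \<theta>" \<theta>s] by (simp add: algebra_simps)
  moreover have "norm (Q (f \<theta>) - f (Q \<theta>)) \<le> norm (Q (f \<theta>) - \<theta>s) + norm (f (Q \<theta>) - \<theta>s)"
    using norm_triangle_ineq4[of "Q (f \<theta>) - \<theta>s" "f (Q \<theta>) - \<theta>s"] by simp
  ultimately show ?thesis
    using norm_comp_sub_fixpoint_le[OF Q_lip \<open>0 \<le> \<rho>\<close> Q_fix f_lip, of \<theta>] by (simp add: algebra_simps)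
qed

lemma nn_integral_le_affine:
  assumes "\<And>\<omega>. \<omega> \<in> space M \<Longrightarrow> f \<omega> \<le> a * g \<omega> + b * h \<omega>"
    and "g \<in> borel_measurable M" "h \<in> borel_measurable M"
    and "\<And>\<omega>. 0 \<le> g \<omega>" "\<And>\<omega>. 0 \<le> h \<omega>" "0 \<le> a" "0 \<le> b"
  shows "(\<integral>\<^sup>+\<omega>. ennreal (f \<omega>) \<partial>M)
    \<le> ennreal a * (\<integral>\<^sup>+\<omega>. ennreal (g \<omega>) \<partial>M) + ennreal b * (\<integral>\<^sup>+\<omega>. ennreal (h \<omega>) \<partial>M)"
proof -
  have "(\<integral>\<^sup>+\<omega>. ennreal (f \<omega>) \<partial>M)
      \<le> (\<integral>\<^sup>+\<omega>. ennreal a * ennreal (g \<omega>) + ennreal b * ennreal (h \<omega>) \<partial>M)"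
  proof (rule nn_integral_mono)
    fix \<omega> assume "\<omega> \<in> space M"
    then have "ennreal (f \<omega>) \<le> ennreal (a * g \<omega> + b * h \<omega>)"
      by (intro ennreal_leI assms(1))
    also have "\<dots> = ennreal a * ennreal (g \<omega>) + ennreal b * ennreal (h \<omega>)"
      using assms(4-7) by (simp add: ennreal_plus ennreal_mult)
    finally show "ennreal (f \<omega>) \<le> \<dots>" .
  qed
  also have "\<dots> = ennreal a * (\<integral>\<^sup>+\<omega>. ennreal (g \<omega>) \<partial>M) + ennreal b * (\<integral>\<^sup>+\<omega>. ennreal (h \<omega>) \<partial>M)"
    using assms by (simp add: nn_integral_add nn_integral_cmult)
  finally show ?thesis .
qed

lemma ennreal_linear_recurrence_le:
  fixes u :: "nat \<Rightarrow> ennreal"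
  assumes step: "\<And>t. u (Suc t) \<le> ennreal \<gamma> * u t + ennreal c"
    and "0 \<le> \<gamma>" "\<gamma> < 1" "0 \<le> c"
  shows "u t \<le> ennreal (\<gamma> ^ t) * u 0 + ennreal (c * (1 - \<gamma> ^ t) / (1 - \<gamma>))"
proof (induction t)
  case 0
  then show ?case by simp
next
  case (Suc t)
  define c\<^sub>t where "c\<^sub>t = c * (1 - \<gamma> ^ t) / (1 - \<gamma>)"
  have "0 \<le> c\<^sub>t"
    using assms by (simp add: c\<^sub>t_def power_le_one)
  have "u (Suc t) \<le> ennreal \<gamma> * (ennreal (\<gamma> ^ t) * u 0 + ennreal c\<^sub>t) + ennreal c"
    using step[of t] Suc.IH unfolding c\<^sub>t_def
    by (meson add_right_mono order.trans mult_left_mono zero_le)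
  also have "\<dots> = ennreal (\<gamma> ^ Suc t) * u 0 + ennreal (\<gamma> * c\<^sub>t + c)"
    using assms \<open>0 \<le> c\<^sub>t\<close>
    by (simp add: distrib_left mult.assoc ennreal_mult' ennreal_plus add.assoc)
  also have "\<gamma> * c\<^sub>t + c = c * (1 - \<gamma> ^ Suc t) / (1 - \<gamma>)"
    using assms by (simp add: c\<^sub>t_def field_simps)
  finally show ?case .
qed

locale perturbed_contraction_iteration =
  fixes M :: "'w measure" and P :: "'e measure"
    and Q :: "'a::real_normed_vector \<Rightarrow> 'a" and Pe :: "'e \<Rightarrow> 'a \<Rightarrow> 'a"
    and \<rho> L \<sigma> :: real and \<theta>s :: 'a and e :: "nat \<Rightarrow> 'w \<Rightarrow> 'e"
  assumes Pe_measurable: "(\<lambda>(x, \<theta>). Pe x \<theta>) \<in> borel_measurable (P \<Otimes>\<^sub>M borel)"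
    and Q_lip: "\<And>\<theta>1 \<theta>2. norm (Q \<theta>1 - Q \<theta>2) \<le> \<rho> * norm (\<theta>1 - \<theta>2)"
    and \<rho>_nonneg: "0 \<le> \<rho>"
    and Q_fix: "Q \<theta>s = \<theta>s"
    and Pe_lip: "\<And>x \<theta>1 \<theta>2. x \<in> space P \<Longrightarrow> norm (Pe x \<theta>1 - Pe x \<theta>2) \<le> L * norm (\<theta>1 - \<theta>2)"
    and L_nonneg: "0 \<le> L"
    and defect_bound: "(\<integral>\<^sup>+ x. ennreal (norm (Pe x \<theta>s - \<theta>s)) \<partial>P) \<le> ennreal \<sigma>"
    and \<sigma>_nonneg: "0 \<le> \<sigma>"
    and e_measurable: "\<And>t. e t \<in> measurable M P"
    and e_law: "\<And>t. distr M P (e t) = P"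
begin

definition fixpoint_defect :: "'e \<Rightarrow> real" where
  "fixpoint_defect x = norm (Pe x \<theta>s - \<theta>s)"

lemma fixpoint_defect_nonneg [simp]: "0 \<le> fixpoint_defect x"
  by (simp add: fixpoint_defect_def)

abbreviation iterates :: "'a \<Rightarrow> nat \<Rightarrow> 'w \<Rightarrow> 'a" where
  "iterates \<theta>0 \<equiv> iter_seq Q Pe \<theta>0 e"

lemma Q_measurable: "Q \<in> borel_measurable borel"
proof -
  have "\<rho>-lipschitz_on UNIV Q"
    using Q_lip \<rho>_nonneg by (intro lipschitz_onI) (auto simp: dist_norm)
  then show ?thesis
    by (intro borel_measurable_continuous_onI lipschitz_on_continuous_on)
qed

lemma iterates_measurable: "iterates \<theta>0 t \<in> borel_measurable M"
proof (induction t)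
  case 0
  then show ?case by simp
next
  case (Suc t)
  have "(\<lambda>\<omega>. Pe (e t \<omega>) (iterates \<theta>0 t \<omega>)) \<in> borel_measurable M"
    using measurable_compose[OF measurable_Pair[OF e_measurable Suc.IH] Pe_measurable] by simp
  from measurable_compose[OF this Q_measurable] show ?case
    by simp
qed

lemma dist_fixpoint_measurable: "(\<lambda>\<theta>. norm (\<theta> - \<theta>s)) \<in> borel_measurable borel"
  by (intro borel_measurable_continuous_onI continuous_intros)

lemma dist_iterates_measurable: "(\<lambda>\<omega>. norm (iterates \<theta>0 t \<omega> - \<theta>s)) \<in> borel_measurable M"
  using measurable_compose[OF iterates_measurable dist_fixpoint_measurable] .

lemma fixpoint_defect_measurable: "fixpoint_defect \<in> borel_measurable P"
proof -
  have "(\<lambda>x. Pe x \<theta>s) \<in> borel_measurable P"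
    using measurable_compose[OF measurable_Pair[OF measurable_ident_sets[OF refl] measurable_const]
        Pe_measurable] by simp
  from measurable_compose[OF this dist_fixpoint_measurable] show ?thesis
    unfolding fixpoint_defect_def .
qed

lemma nn_integral_fixpoint_defect_le:
  "(\<integral>\<^sup>+\<omega>. ennreal (fixpoint_defect (e t \<omega>)) \<partial>M) \<le> ennreal \<sigma>"
proof -
  have "(\<integral>\<^sup>+\<omega>. ennreal (fixpoint_defect (e t \<omega>)) \<partial>M)
      = (\<integral>\<^sup>+x. ennreal (fixpoint_defect x) \<partial>distr M P (e t))"
    using e_measurable fixpoint_defect_measurable by (simp add: nn_integral_distr)
  then show ?thesis
    using defect_bound by (simp add: e_law fixpoint_defect_def)
qed

lemma dist_iterates_Suc_le:
  assumes "\<omega> \<in> space M"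
  shows "norm (iterates \<theta>0 (Suc t) \<omega> - \<theta>s)
    \<le> \<rho> * L * norm (iterates \<theta>0 t \<omega> - \<theta>s) + \<rho> * fixpoint_defect (e t \<omega>)"
  using norm_comp_sub_fixpoint_le[OF Q_lip \<rho>_nonneg Q_fix
      Pe_lip[OF measurable_space[OF e_measurable assms]]]
  by (simp add: fixpoint_defect_def)

lemma order_gap_iterates_le:
  assumes "\<omega> \<in> space M"
  shows "order_gap Q Pe (iterates \<theta>0 t \<omega>) (e t \<omega>)
    \<le> 2 * (\<rho> * L) * norm (iterates \<theta>0 t \<omega> - \<theta>s) + (1 + \<rho>) * fixpoint_defect (e t \<omega>)"
  using norm_comp_commute_diff_le[OF Q_lip \<rho>_nonneg Q_fix
      Pe_lip[OF measurable_space[OF e_measurable assms]] L_nonneg]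
  by (simp add: order_gap_def fixpoint_defect_def)

lemma nn_integral_le_dist_iterates_plus_defect:
  assumes "\<And>\<omega>. \<omega> \<in> space M \<Longrightarrow>
      f \<omega> \<le> a * norm (iterates \<theta>0 t \<omega> - \<theta>s) + b * fixpoint_defect (e t \<omega>)"
    and "0 \<le> a" "0 \<le> b"
  shows "(\<integral>\<^sup>+\<omega>. ennreal (f \<omega>) \<partial>M)
    \<le> ennreal a * (\<integral>\<^sup>+\<omega>. ennreal (norm (iterates \<theta>0 t \<omega> - \<theta>s)) \<partial>M) + ennreal (b * \<sigma>)"
proof -
  have "(\<integral>\<^sup>+\<omega>. ennreal (f \<omega>) \<partial>M)
      \<le> ennreal a * (\<integral>\<^sup>+\<omega>. ennreal (norm (iterates \<theta>0 t \<omega> - \<theta>s)) \<partial>M)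
        + ennreal b * (\<integral>\<^sup>+\<omega>. ennreal (fixpoint_defect (e t \<omega>)) \<partial>M)"
    using assms dist_iterates_measurable measurable_compose[OF e_measurable fixpoint_defect_measurable]
    by (intro nn_integral_le_affine) auto
  also have "\<dots> \<le> ennreal a * (\<integral>\<^sup>+\<omega>. ennreal (norm (iterates \<theta>0 t \<omega> - \<theta>s)) \<partial>M)
        + ennreal b * ennreal \<sigma>"
    by (intro add_left_mono mult_left_mono nn_integral_fixpoint_defect_le) simp
  finally show ?thesis
    using \<open>0 \<le> b\<close> \<sigma>_nonneg by (simp add: ennreal_mult)
qed

lemma expected_dist_iterates_le:
  assumes "\<rho> * L < 1"
  shows "(\<integral>\<^sup>+\<omega>. ennreal (norm (iterates \<theta>0 t \<omega> - \<theta>s)) \<partial>M)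
    \<le> ennreal ((\<rho> * L) ^ t) * (\<integral>\<^sup>+\<omega>. ennreal (norm (iterates \<theta>0 0 \<omega> - \<theta>s)) \<partial>M)
      + ennreal (\<rho> * \<sigma> * (1 - (\<rho> * L) ^ t) / (1 - \<rho> * L))"
proof (rule ennreal_linear_recurrence_le)
  show "(\<integral>\<^sup>+\<omega>. ennreal (norm (iterates \<theta>0 (Suc t) \<omega> - \<theta>s)) \<partial>M)
      \<le> ennreal (\<rho> * L) * (\<integral>\<^sup>+\<omega>. ennreal (norm (iterates \<theta>0 t \<omega> - \<theta>s)) \<partial>M)
        + ennreal (\<rho> * \<sigma>)" for t
    using dist_iterates_Suc_le \<rho>_nonneg L_nonneg
    by (intro nn_integral_le_dist_iterates_plus_defect) auto
qed (use assms \<rho>_nonneg L_nonneg \<sigma>_nonneg in auto)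

lemma expected_order_gap_le:
  "(\<integral>\<^sup>+\<omega>. ennreal (order_gap Q Pe (iterates \<theta>0 t \<omega>) (e t \<omega>)) \<partial>M)
    \<le> ennreal (2 * (\<rho> * L)) * (\<integral>\<^sup>+\<omega>. ennreal (norm (iterates \<theta>0 t \<omega> - \<theta>s)) \<partial>M)
      + ennreal ((1 + \<rho>) * \<sigma>)"
  using order_gap_iterates_le \<rho>_nonneg L_nonneg
  by (intro nn_integral_le_dist_iterates_plus_defect) auto

lemma AE_fixpoint_defect_eq_0:
  assumes "\<sigma> = 0"
  shows "AE \<omega> in M. \<forall>t. fixpoint_defect (e t \<omega>) = 0"
proof -
  have "(\<integral>\<^sup>+x. ennreal (fixpoint_defect x) \<partial>P) = 0"
    using defect_bound assms by (simp add: fixpoint_defect_def)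
  then have "AE x in P. fixpoint_defect x = 0"
    using fixpoint_defect_measurable
    by (subst (asm) nn_integral_0_iff_AE) (auto elim!: eventually_mono)
  then have "AE x in distr M P (e t). fixpoint_defect x = 0" for t
    unfolding e_law .
  then have "AE \<omega> in M. fixpoint_defect (e t \<omega>) = 0" for t
    using fixpoint_defect_measurable by (subst (asm) AE_distr_iff[OF e_measurable]) auto
  then show ?thesis
    by (simp add: AE_all_countable)
qed

lemma AE_dist_iterates_and_order_gap_le:
  assumes "\<sigma> = 0"
  shows "AE \<omega> in M. \<forall>t.
      norm (iterates \<theta>0 t \<omega> - \<theta>s) \<le> (\<rho> * L) ^ t * norm (\<theta>0 - \<theta>s)
    \<and> order_gap Q Pe (iterates \<theta>0 t \<omega>) (e t \<omega>) \<le> 2 * (\<rho> * L) ^ (t + 1) * norm (\<theta>0 - \<theta>s)"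
  using AE_fixpoint_defect_eq_0[OF assms]
proof (rule AE_mp[OF _ AE_I2[OF impI]])
  fix \<omega> assume \<omega>: "\<omega> \<in> space M" and no_defect: "\<forall>t. fixpoint_defect (e t \<omega>) = 0"
  have \<rho>L_nonneg: "0 \<le> \<rho> * L"
    using \<rho>_nonneg L_nonneg by simp
  have dist: "norm (iterates \<theta>0 t \<omega> - \<theta>s) \<le> (\<rho> * L) ^ t * norm (\<theta>0 - \<theta>s)" for t
  proof (induction t)
    case 0
    then show ?case by simp
  next
    case (Suc t)
    have "norm (iterates \<theta>0 (Suc t) \<omega> - \<theta>s) \<le> \<rho> * L * norm (iterates \<theta>0 t \<omega> - \<theta>s)"
      using dist_iterates_Suc_le[OF \<omega>, of \<theta>0 t] no_defect by simp
    also have "\<dots> \<le> \<rho> * L * ((\<rho> * L) ^ t * norm (\<theta>0 - \<theta>s))"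
      using Suc.IH \<rho>L_nonneg by (rule mult_left_mono)
    finally show ?case
      by (simp add: mult.assoc)
  qed
  have "order_gap Q Pe (iterates \<theta>0 t \<omega>) (e t \<omega>) \<le> 2 * (\<rho> * L) ^ (t + 1) * norm (\<theta>0 - \<theta>s)" for t
  proof -
    have "order_gap Q Pe (iterates \<theta>0 t \<omega>) (e t \<omega>) \<le> 2 * (\<rho> * L) * norm (iterates \<theta>0 t \<omega> - \<theta>s)"
      using order_gap_iterates_le[OF \<omega>, of \<theta>0 t] no_defect by simp
    also have "\<dots> \<le> 2 * (\<rho> * L) * ((\<rho> * L) ^ t * norm (\<theta>0 - \<theta>s))"
      using dist[of t] \<rho>L_nonneg by (intro mult_left_mono) auto
    finally show ?thesis
      by (simp add: mult_ac)
  qed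
  with dist show "\<forall>t. norm (iterates \<theta>0 t \<omega> - \<theta>s) \<le> (\<rho> * L) ^ t * norm (\<theta>0 - \<theta>s)
    \<and> order_gap Q Pe (iterates \<theta>0 t \<omega>) (e t \<omega>) \<le> 2 * (\<rho> * L) ^ (t + 1) * norm (\<theta>0 - \<theta>s)"
    by blast
qed

end

theorem theorem4p10:
  fixes M :: "'w measure" and P :: "'e measure"
    and Q :: "'a::banach \<Rightarrow> 'a" and Pe :: "'e \<Rightarrow> 'a \<Rightarrow> 'a"
    and \<rho> L \<sigma> :: real and \<theta>s \<theta>0 :: 'a
    and e :: "nat \<Rightarrow> 'w \<Rightarrow> 'e"
  assumes M_prob: "prob_space M"
    and P_prob: "prob_space P"
    and Pe_meas: "(\<lambda>(x, \<theta>). Pe x \<theta>) \<in> borel_measurable (P \<Otimes>\<^sub>M borel)"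
    and A1_lip: "\<And>\<theta>1 \<theta>2. norm (Q \<theta>1 - Q \<theta>2) \<le> \<rho> * norm (\<theta>1 - \<theta>2)"
    and A1_rho: "0 \<le> \<rho>" "\<rho> < 1"
    and A1_fix: "Q \<theta>s = \<theta>s"
    and A1_uniq: "\<And>\<theta>. Q \<theta> = \<theta> \<Longrightarrow> \<theta> = \<theta>s"
    and A2_lip: "\<And>x \<theta>1 \<theta>2. x \<in> space P \<Longrightarrow> norm (Pe x \<theta>1 - Pe x \<theta>2) \<le> L * norm (\<theta>1 - \<theta>2)"
    and A2_L: "0 \<le> L"
    and A3: "(\<integral>\<^sup>+ x. ennreal (norm (Pe x \<theta>s - \<theta>s)) \<partial>P) \<le> ennreal \<sigma>"
    and A3_\<sigma>: "0 \<le> \<sigma>"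
    and e_indep: "prob_space.indep_vars M (\<lambda>_. P) e UNIV"
    and e_law: "\<And>t. distr M P (e t) = P"
  shows
    "(\<rho> * L < 1 \<longrightarrow> (\<forall>t.
        (\<integral>\<^sup>+ \<omega>. ennreal (norm (iter_seq Q Pe \<theta>0 e t \<omega> - \<theta>s)) \<partial>M)
          \<le> ennreal ((\<rho> * L) ^ t) * (\<integral>\<^sup>+ \<omega>. ennreal (norm (iter_seq Q Pe \<theta>0 e 0 \<omega> - \<theta>s)) \<partial>M)
            + ennreal (\<rho> * \<sigma> * (1 - (\<rho> * L) ^ t) / (1 - \<rho> * L))))
   \<and> (\<forall>t.
        (\<integral>\<^sup>+ \<omega>. ennreal (order_gap Q Pe (iter_seq Q Pe \<theta>0 e t \<omega>) (e t \<omega>)) \<partial>M)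
          \<le> ennreal (2 * (\<rho> * L)) * (\<integral>\<^sup>+ \<omega>. ennreal (norm (iter_seq Q Pe \<theta>0 e t \<omega> - \<theta>s)) \<partial>M)
            + ennreal ((1 + \<rho>) * \<sigma>))
   \<and> (\<sigma> = 0 \<and> \<rho> * L < 1 \<longrightarrow>
        (AE \<omega> in M. \<forall>t.
           norm (iter_seq Q Pe \<theta>0 e t \<omega> - \<theta>s) \<le> (\<rho> * L) ^ t * norm (\<theta>0 - \<theta>s)
         \<and> order_gap Q Pe (iter_seq Q Pe \<theta>0 e t \<omega>) (e t \<omega>) \<le> 2 * (\<rho> * L) ^ (t + 1) * norm (\<theta>0 - \<theta>s)))"
proof -
  \<comment> \<open>Independence is used only for the measurability of each \<open>e t\<close>.\<close>
  have e_measurable: "e t \<in> measurable M P" for t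
    using e_indep by (simp add: prob_space.indep_vars_def[OF M_prob])
  interpret perturbed_contraction_iteration M P Q Pe \<rho> L \<sigma> \<theta>s e
    using Pe_meas A1_lip A1_rho(1) A1_fix A2_lip A2_L A3 A3_\<sigma> e_measurable e_law
    by unfold_locales
  show ?thesis
    using expected_dist_iterates_le expected_order_gap_le AE_dist_iterates_and_order_gap_le
    by blast
qed

end
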